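(* For every integer $k\ge2$, the Riemann zeta value $\zeta(k)$ lies in the $\mathbb{Q}$-linear span of $S'_{k,1}$.
   Context: $A(\theta)=\log|2\sin(\theta/2)|$; for $k_u\ge2$, $\mathrm{SLs}(k_1,\dots,k_n)=\int_0^{\pi/3}\int_0^{\theta_n}\cdots\int_0^{\theta_2}\prod_{u=1}^n(\theta_u-\pi/3)^{k_u-2}A(\theta_u)\,d\theta_1\cdots d\theta_n$, with $\mathrm{SLs}(\emptyset)=1$. For $k,d\in\mathbb{Z}_{\ge0}$, $S'_{k,d}=\{\pi^{2m}\mathrm{SLs}(k_1,\dots,k_n): 2m+k_1+\dots+k_n=k,\ m\ge0,\ 0\le n\le d,\ \text{each }k_i\ge3\text{ odd}\}$. *)

theory Defs
  imports "HOL-Analysis.Analysis"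
begin

definition clA :: "real \<Rightarrow> real" where
  "clA \<theta> = ln \<bar>2 * sin (\<theta> / 2)\<bar>"

text \<open>Iterated integral, list given outermost-first:
  SLs_aux (k_n # ... # k_1) x integrates over 0 \<le> theta_1 \<le> ... \<le> theta_n \<le> x.\<close>
fun SLs_aux :: "nat list \<Rightarrow> real \<Rightarrow> real" where
  "SLs_aux [] x = 1"
| "SLs_aux (k # ks) x =
     integral {0..x} (\<lambda>t. (t - pi/3) ^ (k - 2) * clA t * SLs_aux ks t)"

text \<open>SLs(k_1,...,k_n), arguments listed as [k_1,...,k_n].\<close>
definition SLs :: "nat list \<Rightarrow> real" where
  "SLs ks = SLs_aux (rev ks) (pi/3)"

definition Sprime :: "nat \<Rightarrow> nat \<Rightarrow> real set" where
  "Sprime k d = {pi ^ (2*m) * SLs ks | m ks.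
      2*m + sum_list ks = k \<and> length ks \<le> d \<and> (\<forall>j\<in>set ks. 3 \<le> j \<and> odd j)}"

definition qspan :: "real set \<Rightarrow> real set" where
  "qspan S = {x. \<exists>F c. finite F \<and> F \<subseteq> S \<and> (\<forall>s\<in>F. c s \<in> \<rat>) \<and> x = (\<Sum>s\<in>F. c s * s)}"

definition zeta_val :: "nat \<Rightarrow> real" where
  "zeta_val k = (\<Sum>n. 1 / real (Suc n) ^ k)"

end

(* Let Cl_r be the Clausen function, sum cos (n x) / n^r for odd r and sum sin (n x) / n^r for
   even r, and Sl_r its companion with cos and sin exchanged.  Differentiation lowers r by one (up to
   sign), and Abel's theorem for the dilogarithm gives Cl_2' = - A and Sl_2' = (x - pi) / 2 on
   (0, 2 pi).

   Even k: integrating upwards from Sl_2 shows that Sl_2m is, on [0, 2 pi], a homogeneous polynomial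
   in x and pi with rational coefficients; evaluating at 0 gives zeta (2 m) in Q pi^(2 m).

   Odd k: Taylor's formula with integral remainder for Cl_k at 0, evaluated at pi/3, writes Cl_k (pi/3)
   as zeta k plus rational multiples of pi^i zeta (k - i) for even 0 < i < k - 2, plus a remainder
   which one integration by parts turns into a rational multiple of SLs (k).  As
   Cl_k (pi/3) = (1 - 2^(1-k)) (1 - 3^(1-k)) / 2 * zeta k and this factor is not 1, one can solve for
   zeta k, and induction on k finishes the proof. *)

theory Submission
  imports Defs
begin

section \<open>Series of cosines and sines over powers\<close>

(* The n = 0 terms vanish because x / 0 = 0. *)
definition cos_series :: "nat \<Rightarrow> real \<Rightarrow> real" where
  "cos_series r x = (\<Sum>n. cos (real n * x) / real n ^ r)"

definition sin_series :: "nat \<Rightarrow> real \<Rightarrow> real" where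
  "sin_series r x = (\<Sum>n. sin (real n * x) / real n ^ r)"

lemma summable_one_over_power: "2 \<le> r \<Longrightarrow> summable (\<lambda>n. 1 / real n ^ r)"
  using inverse_power_summable[of r] by (simp add: divide_inverse)

lemma summable_bounded_over_power:
  assumes "2 \<le> r" "\<And>y. \<bar>f y\<bar> \<le> 1"
  shows "summable (\<lambda>n. f (real n * x) / real n ^ r)"
  by (rule summable_comparison_test[OF _ summable_one_over_power[OF assms(1)]])
     (auto simp: abs_divide intro!: divide_right_mono assms(2))

lemma continuous_on_bounded_over_power:
  assumes "2 \<le> r" "\<And>y. \<bar>f y\<bar> \<le> 1" "continuous_on UNIV f"
  shows "continuous_on UNIV (\<lambda>x. \<Sum>n. f (real n * x) / real n ^ r)"
proof (rule uniform_limit_theorem)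
  show "uniform_limit UNIV (\<lambda>N x. \<Sum>n<N. f (real n * x) / real n ^ r)
          (\<lambda>x. \<Sum>n. f (real n * x) / real n ^ r) sequentially"
    by (rule Weierstrass_m_test[OF _ summable_one_over_power[OF assms(1)]])
       (auto simp: abs_divide intro!: divide_right_mono assms(2))
  show "\<forall>\<^sub>F N in sequentially. continuous_on UNIV (\<lambda>x. \<Sum>n<N. f (real n * x) / real n ^ r)"
    unfolding divide_inverse
    by (intro always_eventually allI continuous_on_sum continuous_on_mult_right
          continuous_on_compose2[OF assms(3)] continuous_intros) auto
qed auto

lemma has_real_derivative_bounded_over_power:
  assumes r: "3 \<le> r" and f: "\<And>y. \<bar>f y\<bar> \<le> 1" and g: "\<And>y. \<bar>g y\<bar> \<le> 1"
    and f': "\<And>y. (f has_real_derivative g y) (at y)"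
  shows "((\<lambda>x. \<Sum>n. f (real n * x) / real n ^ r) has_real_derivative
           (\<Sum>n. g (real n * x) / real n ^ (r - 1))) (at x)"
proof -
  obtain r' where r': "r = Suc r'" "2 \<le> r'"
    using r by (cases r) auto
  have shift: "real n * g y / real n ^ r = g y / real n ^ (r - 1)" for n y
    using r' by (cases n) auto
  have "((\<lambda>x. \<Sum>n. f (real n * x) / real n ^ r) has_real_derivative
           (\<Sum>n. real n * g (real n * x) / real n ^ r)) (at x)"
  proof (rule has_field_derivative_series'(2)[OF convex_UNIV])
    show "((\<lambda>x. f (real n * x) / real n ^ r) has_real_derivative
            real n * g (real n * y) / real n ^ r) (at y within UNIV)" for n y
    proof -
      have "((\<lambda>x. real n * x) has_real_derivative real n) (at y)"
        by (auto intro!: derivative_eq_intros)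
      from DERIV_cdivide[OF DERIV_chain2[OF f' this], of "real n ^ r"]
      show ?thesis by (simp add: mult.commute)
    qed
    show "uniformly_convergent_on UNIV (\<lambda>N x. \<Sum>n<N. real n * g (real n * x) / real n ^ r)"
      unfolding shift
      by (rule Weierstrass_m_test'[OF _ summable_one_over_power])
         (use r in \<open>auto simp: abs_divide intro!: divide_right_mono g\<close>)
    show "summable (\<lambda>n. f (real n * 0) / real n ^ r)"
      using summable_bounded_over_power[of r f 0] r f by simp
  qed auto
  then show ?thesis unfolding shift .
qed

lemma continuous_on_cos_series: "2 \<le> r \<Longrightarrow> continuous_on UNIV (cos_series r)"
  unfolding cos_series_def[abs_def]
  by (rule continuous_on_bounded_over_power) (auto intro: continuous_intros)

lemma continuous_on_sin_series: "2 \<le> r \<Longrightarrow> continuous_on UNIV (sin_series r)"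
  unfolding sin_series_def[abs_def]
  by (rule continuous_on_bounded_over_power) (auto intro: continuous_intros)

lemma cos_series_has_derivative:
  "3 \<le> r \<Longrightarrow> (cos_series r has_real_derivative - sin_series (r - 1) x) (at x)"
  using has_real_derivative_bounded_over_power[of r cos "\<lambda>y. - sin y"]
  unfolding cos_series_def[abs_def] sin_series_def
  by (auto intro: derivative_eq_intros simp: suminf_minus summable_bounded_over_power)

lemma sin_series_has_derivative:
  "3 \<le> r \<Longrightarrow> (sin_series r has_real_derivative cos_series (r - 1) x) (at x)"
  using has_real_derivative_bounded_over_power[of r sin cos]
  unfolding cos_series_def sin_series_def[abs_def]
  by (auto intro: derivative_eq_intros)

lemma zeta_val_sums: "2 \<le> r \<Longrightarrow> (\<lambda>n. 1 / real n ^ r) sums zeta_val r"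
proof -
  assume r: "2 \<le> r"
  have "(\<lambda>n. 1 / real (Suc n) ^ r) sums zeta_val r"
    using summable_one_over_power[OF r] unfolding zeta_val_def
    by (intro summable_sums) (subst summable_Suc_iff)
  moreover have "(0::real) ^ r = 0"
    using r by simp
  ultimately show ?thesis
    by (subst (asm) sums_Suc_iff) simp
qed

lemma cos_series_0: "2 \<le> r \<Longrightarrow> cos_series r 0 = zeta_val r"
  unfolding cos_series_def using zeta_val_sums by (simp add: sums_iff)

lemma sin_series_0: "sin_series r 0 = 0"
  unfolding sin_series_def by simp

lemma sin_series_2pi: "sin_series r (2 * pi) = 0"
proof -
  have "sin (real n * (2 * pi)) = 0" for n
    using sin_npi[of "2 * n"] by (simp add: mult_ac)
  then show ?thesis unfolding sin_series_def by simp
qed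

section \<open>The dilogarithm on the unit circle\<close>

definition dilog :: "complex \<Rightarrow> complex" where
  "dilog z = (\<Sum>n. (1 / of_nat n ^ 2) * z ^ n)"

lemma norm_dilog_term_le:
  fixes z :: complex
  assumes "norm z \<le> 1"
  shows "norm ((1 / of_nat n ^ 2) * z ^ n) \<le> 1 / real n ^ 2"
proof -
  have "norm ((1 / (of_nat n ^ 2 :: complex)) * z ^ n) = (1 / real n ^ 2) * norm z ^ n"
    by (simp add: norm_mult norm_divide norm_power)
  also have "\<dots> \<le> (1 / real n ^ 2) * 1"
    by (intro mult_left_mono power_le_one) (use assms in auto)
  finally show ?thesis by simp
qed

lemma continuous_on_dilog: "continuous_on (cball 0 1) dilog"
  unfolding dilog_def[abs_def]
proof (rule uniform_limit_theorem)
  show "uniform_limit (cball 0 1) (\<lambda>N (z::complex). \<Sum>n<N. (1 / of_nat n ^ 2) * z ^ n)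
          (\<lambda>z. \<Sum>n. (1 / of_nat n ^ 2) * z ^ n) sequentially"
    by (rule Weierstrass_m_test[where M = "\<lambda>n. 1 / real n ^ 2"])
       (use norm_dilog_term_le summable_one_over_power in auto)
  show "\<forall>\<^sub>F N in sequentially.
          continuous_on (cball 0 1) (\<lambda>z::complex. \<Sum>n<N. (1 / of_nat n ^ 2) * z ^ n)"
    by (intro always_eventually allI continuous_on_sum) (intro continuous_intros)
qed auto

lemma summable_dilog_cis: "summable (\<lambda>n. (1 / of_nat n ^ 2) * cis t ^ n)"
  by (rule summable_norm_cancel, rule summable_comparison_test[OF _ summable_one_over_power[of 2]])
     (use norm_dilog_term_le[of "cis t"] in auto)

lemma Re_dilog_cis: "Re (dilog (cis t)) = cos_series 2 t"
proof -
  have "Re (cis t ^ n) = cos (real n * t)" for n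
    by (simp only: Complex.DeMoivre) simp
  then show ?thesis
    unfolding dilog_def cos_series_def Re_suminf[OF summable_dilog_cis] by simp
qed

lemma Im_dilog_cis: "Im (dilog (cis t)) = sin_series 2 t"
proof -
  have "Im (cis t ^ n) = sin (real n * t)" for n
    by (simp only: Complex.DeMoivre) simp
  then show ?thesis
    unfolding dilog_def sin_series_def Im_suminf[OF summable_dilog_cis] by simp
qed

lemma dilog_has_field_derivative:
  assumes z0: "z \<noteq> 0" and z1: "norm z < 1"
  shows "(dilog has_field_derivative - Ln (1 - z) / z) (at z)"
proof -
  define c :: "nat \<Rightarrow> complex" where "c n = 1 / of_nat n ^ 2" for n
  have "summable (\<lambda>n. complex_of_real (1 / real n ^ 2))"
    using summable_one_over_power[of 2] by (simp only: summable_complex_of_real)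
  then have "summable (\<lambda>n. c n * 1 ^ n)"
    by (simp add: c_def)
  then have D: "(dilog has_field_derivative (\<Sum>n. diffs c n * z ^ n)) (at z)"
    unfolding dilog_def[abs_def] c_def[symmetric] by (rule termdiffs_strong) (use z1 in simp)
  have diffs_c: "diffs c n = 1 / of_nat (Suc n)" for n
    unfolding diffs_def c_def by (simp add: power2_eq_square del: of_nat_Suc)
  have "(\<lambda>n. - ((- (- z)) ^ n) / of_nat n) sums Ln (1 + - z)"
    by (rule Ln_series') (use z1 in simp)
  then have "(\<lambda>n. z ^ n / of_nat n) sums (- Ln (1 - z))"
    using sums_minus by fastforce
  then have "(\<lambda>n. z ^ Suc n / of_nat (Suc n)) sums (- Ln (1 - z))"
    by (subst sums_Suc_iff) simp
  then have "(\<lambda>n. z * (diffs c n * z ^ n)) sums (- Ln (1 - z))"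
    by (simp add: diffs_c del: of_nat_Suc)
  then have "(\<lambda>n. diffs c n * z ^ n) sums (- Ln (1 - z) / z)"
    by (rule sums_mult_D[OF _ z0])
  with D show ?thesis
    by (simp add: sums_iff)
qed

lemma has_integral_Ln_one_minus_scaled_cis:
  assumes r: "0 < r" "r < 1" and "x \<le> s"
  shows "((\<lambda>t. - \<i> * Ln (1 - of_real r * cis t)) has_integral
           dilog (of_real r * cis s) - dilog (of_real r * cis x)) {x..s}"
proof (rule fundamental_theorem_of_calculus[OF \<open>x \<le> s\<close>])
  fix t
  define g where "g w = of_real r * exp (\<i> * w)" for w :: complex
  have g: "g (of_real t) \<noteq> 0" "norm (g (of_real t)) < 1"
    using r by (auto simp: g_def norm_mult)
  have "(g has_field_derivative \<i> * g (of_real t)) (at (of_real t))"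
    unfolding g_def by (auto intro!: derivative_eq_intros)
  from DERIV_chain2[OF dilog_has_field_derivative[OF g] this]
  have "((\<lambda>w. dilog (g w)) has_field_derivative - \<i> * Ln (1 - g (of_real t))) (at (of_real t))"
    using g(1) by (simp add: field_simps)
  from has_vector_derivative_real_field[OF this]
  show "((\<lambda>t. dilog (of_real r * cis t)) has_vector_derivative
          - \<i> * Ln (1 - of_real r * cis t)) (at t within {x..s})"
    by (simp add: g_def cis_conv_exp)
qed

lemma cos_less_one: "0 < t \<Longrightarrow> t < 2 * pi \<Longrightarrow> cos t < 1"
proof -
  assume t: "0 < t" "t < 2 * pi"
  have "cos t \<noteq> 1"
  proof
    assume "cos t = 1"
    then obtain n :: int where "t = real_of_int n * 2 * pi"
      using cos_one_2pi_int by blast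
    then have "0 < n" "n < 1"
      using t by (auto simp: zero_less_mult_iff)
    then show False by simp
  qed
  then show ?thesis
    using cos_le_one[of t] by linarith
qed

lemma norm_Ln_le_annulus:
  assumes "0 < m" "m \<le> norm w" "norm w \<le> 2"
  shows "norm (Ln w) \<le> 1 + \<bar>ln m\<bar> + pi"
proof -
  have w: "w \<noteq> 0"
    using assms by auto
  have "ln (norm w) \<le> ln 2"
    using assms by (subst ln_le_cancel_iff) auto
  then have "ln (norm w) \<le> 1"
    using ln_2_less_1 by linarith
  moreover have "ln m \<le> ln (norm w)"
    using assms by (subst ln_le_cancel_iff) auto
  moreover have "\<bar>Im (Ln w)\<bar> \<le> pi"
    using mpi_less_Im_Ln[OF w] Im_Ln_le_pi[OF w] by linarith
  ultimately show ?thesis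
    using cmod_le[of "Ln w"] Re_Ln[OF w] by linarith
qed

lemma norm_one_minus_scaled_cis_bounds:
  assumes "0 < x" "x \<le> s" "s < 2 * pi"
  obtains m where "0 < m"
    "\<And>t r. t \<in> {x..s} \<Longrightarrow> 0 \<le> r \<Longrightarrow> r \<le> 1 \<Longrightarrow>
       m \<le> norm (1 - of_real r * cis t) \<and> norm (1 - of_real r * cis t) \<le> 2"
proof -
  have cont: "continuous_on {x..s} (\<lambda>t. 1 - cos t)"
    by (intro continuous_intros)
  obtain u where u: "u \<in> {x..s}" "\<And>t. t \<in> {x..s} \<Longrightarrow> 1 - cos u \<le> 1 - cos t"
    using continuous_attains_inf[OF compact_Icc _ cont] assms by auto
  define m where "m = min 1 (1 - cos u)"
  have "0 < m"
    using cos_less_one[of u] u assms unfolding m_def by auto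
  moreover have "m \<le> norm (1 - of_real r * cis t) \<and> norm (1 - of_real r * cis t) \<le> 2"
    if t: "t \<in> {x..s}" and r: "0 \<le> r" "r \<le> 1" for t r
  proof
    have "r * cos t \<le> max 0 (cos t)"
      using r by (cases "cos t \<le> 0") (auto simp: mult_nonneg_nonpos mult_left_le_one_le)
    then have "m \<le> 1 - r * cos t"
      using u(2)[OF t] unfolding m_def by auto
    also have "\<dots> \<le> norm (1 - of_real r * cis t)"
      using abs_Re_le_cmod[of "1 - of_real r * cis t"] by simp
    finally show "m \<le> norm (1 - of_real r * cis t)" .
    show "norm (1 - of_real r * cis t) \<le> 2"
      using norm_triangle_ineq4[of 1 "of_real r * cis t"] r by (simp add: norm_mult)
  qed
  ultimately show ?thesis
    using that by blast
qed

(* The power series of the derivative diverges on the unit circle, so the radius is let tend to 1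
   under the integral (dominated convergence). *)
lemma has_integral_Ln_one_minus_cis:
  assumes xs: "0 < x" "x \<le> s" "s < 2 * pi"
  shows "((\<lambda>t. - \<i> * Ln (1 - cis t)) has_integral dilog (cis s) - dilog (cis x)) {x..s}"
proof -
  define \<rho> where "\<rho> k = 1 - inverse (real (Suc (Suc k)))" for k
  have \<rho>: "0 < \<rho> k" "\<rho> k < 1" for k
    unfolding \<rho>_def by (auto simp: field_simps)
  have \<rho>_lim: "\<rho> \<longlonglongrightarrow> 1"
    unfolding \<rho>_def using LIMSEQ_Suc[OF LIMSEQ_inverse_real_of_nat_add_minus[of 1]] by simp
  obtain m where m: "0 < m" "\<And>t r. t \<in> {x..s} \<Longrightarrow> 0 \<le> r \<Longrightarrow> r \<le> 1 \<Longrightarrow>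
       m \<le> norm (1 - of_real r * cis t) \<and> norm (1 - of_real r * cis t) \<le> 2"
    using norm_one_minus_scaled_cis_bounds[OF xs] by blast
  have dilog_lim: "(\<lambda>k. dilog (of_real (\<rho> k) * cis y)) \<longlonglongrightarrow> dilog (cis y)" for y
  proof (rule continuous_on_tendsto_compose[OF continuous_on_dilog])
    show "(\<lambda>k. of_real (\<rho> k) * cis y) \<longlonglongrightarrow> cis y"
      using tendsto_mult[OF tendsto_of_real[OF \<rho>_lim] tendsto_const[of "cis y"]] by simp
    show "\<forall>\<^sub>F k in sequentially. of_real (\<rho> k) * cis y \<in> cball 0 1"
      using \<rho> by (intro always_eventually) (auto simp: norm_mult less_imp_le)
  qed simp
  show ?thesis
  proof (rule has_integral_dominated_convergence
      [where f = "\<lambda>k t. - \<i> * Ln (1 - of_real (\<rho> k) * cis t)" and h = "\<lambda>t. 1 + \<bar>ln m\<bar> + pi"])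
    show "((\<lambda>t. - \<i> * Ln (1 - of_real (\<rho> k) * cis t)) has_integral
          dilog (of_real (\<rho> k) * cis s) - dilog (of_real (\<rho> k) * cis x)) {x..s}" for k
      by (rule has_integral_Ln_one_minus_scaled_cis[OF \<rho> xs(2)])
    show "\<forall>t\<in>{x..s}. norm (- \<i> * Ln (1 - of_real (\<rho> k) * cis t)) \<le> 1 + \<bar>ln m\<bar> + pi" for k
      using m \<rho>[of k] by (auto simp: norm_mult intro!: norm_Ln_le_annulus)
    show "\<forall>t\<in>{x..s}. (\<lambda>k. - \<i> * Ln (1 - of_real (\<rho> k) * cis t)) \<longlonglongrightarrow> - \<i> * Ln (1 - cis t)"
    proof
      fix t assume t: "t \<in> {x..s}"
      have "1 - cis t \<notin> \<real>\<^sub>\<le>\<^sub>0"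
        using cos_less_one[of t] t xs by (auto simp: complex_nonpos_Reals_iff)
      moreover have "(\<lambda>k. 1 - of_real (\<rho> k) * cis t) \<longlonglongrightarrow> 1 - of_real 1 * cis t"
        by (intro tendsto_intros \<rho>_lim)
      ultimately have "(\<lambda>k. Ln (1 - of_real (\<rho> k) * cis t)) \<longlonglongrightarrow> Ln (1 - cis t)"
        using isCont_tendsto_compose[OF continuous_at_Ln] by fastforce
      then show "(\<lambda>k. - \<i> * Ln (1 - of_real (\<rho> k) * cis t)) \<longlonglongrightarrow> - \<i> * Ln (1 - cis t)"
        by (rule tendsto_mult_left)
    qed
  qed (auto intro: tendsto_diff dilog_lim)
qed

lemma clA_eq_ln_sin: "0 < t \<Longrightarrow> t < 2 * pi \<Longrightarrow> clA t = ln (2 * sin (t / 2))"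
  unfolding clA_def by (subst abs_of_pos) (auto intro: sin_gt_zero)

lemma Ln_one_minus_cis:
  assumes t: "0 < t" "t < 2 * pi"
  shows "Ln (1 - cis t) = of_real (clA t) + \<i> * of_real ((t - pi) / 2)"
proof -
  have s: "0 < sin (t / 2)"
    using t by (intro sin_gt_zero) auto
  have "cos ((t - pi) / 2) = sin (t / 2)" "sin ((t - pi) / 2) = - cos (t / 2)"
    using cos_diff[of "t / 2" "pi / 2"] sin_diff[of "t / 2" "pi / 2"]
    by (simp_all add: diff_divide_distrib)
  moreover have "cos t = 1 - 2 * sin (t / 2) ^ 2" "sin t = 2 * sin (t / 2) * cos (t / 2)"
    using cos_double_sin[of "t / 2"] sin_double[of "t / 2"] by simp_all
  ultimately have "of_real (2 * sin (t / 2)) * cis ((t - pi) / 2) = 1 - cis t"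
    by (simp add: complex_eq_iff power2_eq_square)
  then have "exp (of_real (clA t) + \<i> * of_real ((t - pi) / 2)) = 1 - cis t"
    using s t by (simp add: clA_eq_ln_sin exp_add exp_of_real cis_conv_exp)
  moreover have "Ln (exp (of_real (clA t) + \<i> * of_real ((t - pi) / 2))) =
      of_real (clA t) + \<i> * of_real ((t - pi) / 2)"
    by (rule Ln_exp) (use t in auto)
  ultimately show ?thesis
    by simp
qed

lemma has_integral_cos_series_2:
  assumes "0 < x" "x \<le> s" "s < 2 * pi"
  shows "((\<lambda>t. (t - pi) / 2) has_integral cos_series 2 s - cos_series 2 x) {x..s}"
proof -
  have "(Re \<circ> (\<lambda>t. - \<i> * Ln (1 - cis t)) has_integral Re (dilog (cis s) - dilog (cis x))) {x..s}"
    by (rule has_integral_linear[OF has_integral_Ln_one_minus_cis[OF assms] bounded_linear_Re])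
  then have "(Re \<circ> (\<lambda>t. - \<i> * Ln (1 - cis t)) has_integral cos_series 2 s - cos_series 2 x) {x..s}"
    by (simp add: Re_dilog_cis)
  moreover have "(Re \<circ> (\<lambda>t. - \<i> * Ln (1 - cis t))) t = (t - pi) / 2" if "t \<in> {x..s}" for t
    using that assms Ln_one_minus_cis[of t] by simp
  ultimately show ?thesis
    by (rule has_integral_cong[THEN iffD1, rotated])
qed

lemma has_integral_sin_series_2:
  assumes "0 < x" "x \<le> s" "s < 2 * pi"
  shows "((\<lambda>t. - clA t) has_integral sin_series 2 s - sin_series 2 x) {x..s}"
proof -
  have "(Im \<circ> (\<lambda>t. - \<i> * Ln (1 - cis t)) has_integral Im (dilog (cis s) - dilog (cis x))) {x..s}"
    by (rule has_integral_linear[OF has_integral_Ln_one_minus_cis[OF assms] bounded_linear_Im])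
  then have "(Im \<circ> (\<lambda>t. - \<i> * Ln (1 - cis t)) has_integral sin_series 2 s - sin_series 2 x) {x..s}"
    by (simp add: Im_dilog_cis)
  moreover have "(Im \<circ> (\<lambda>t. - \<i> * Ln (1 - cis t))) t = - clA t" if "t \<in> {x..s}" for t
    using that assms Ln_one_minus_cis[of t] by simp
  ultimately show ?thesis
    by (rule has_integral_cong[THEN iffD1, rotated])
qed

lemma has_real_derivative_of_has_integral:
  assumes F: "\<And>x s. a < x \<Longrightarrow> x \<le> s \<Longrightarrow> s < b \<Longrightarrow> (f has_integral F s - F x) {x..s}"
    and f: "continuous_on {a<..<b} f" and t: "a < t" "t < b"
  shows "(F has_real_derivative f t) (at t)"
proof -
  define c d where "c = (a + t) / 2" and "d = (t + b) / 2"
  have cd: "a < c" "c < t" "t < d" "d < b"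
    using t by (auto simp: c_def d_def)
  have "continuous_on {c..d} f"
    by (rule continuous_on_subset[OF f]) (use cd in auto)
  then have "((\<lambda>u. integral {c..u} f) has_vector_derivative f t) (at t within {c..d})"
    by (rule integral_has_vector_derivative) (use cd in auto)
  moreover have "at t within {c..d} = at t"
    by (rule at_within_interior) (use cd in auto)
  ultimately have "((\<lambda>u. F c + integral {c..u} f) has_real_derivative f t) (at t)"
    by (auto intro!: derivative_eq_intros simp: has_real_derivative_iff_has_vector_derivative)
  then show ?thesis
  proof (rule has_field_derivative_transform_within_open[where S = "{c<..<d}"])
    show "F c + integral {c..u} f = F u" if "u \<in> {c<..<d}" for u
      using F[of c u] cd that by (auto dest: integral_unique)
  qed (use cd in auto)
qed

lemma continuous_on_clA: "continuous_on {0<..<2 * pi} clA"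
proof -
  have "continuous_on {0<..<2 * pi} (\<lambda>t. ln (2 * sin (t / 2)))"
  proof (intro continuous_intros ballI)
    show "2 * sin (t / 2) \<noteq> 0" if "t \<in> {0<..<2 * pi}" for t
      using that sin_gt_zero[of "t / 2"] by auto
  qed simp
  then show ?thesis
    by (rule continuous_on_cong[THEN iffD1, rotated 2]) (auto simp: clA_eq_ln_sin)
qed

lemma cos_series_2_has_derivative:
  "0 < t \<Longrightarrow> t < 2 * pi \<Longrightarrow> (cos_series 2 has_real_derivative (t - pi) / 2) (at t)"
  by (rule has_real_derivative_of_has_integral[OF has_integral_cos_series_2])
     (auto intro!: continuous_intros)

lemma sin_series_2_has_derivative:
  "0 < t \<Longrightarrow> t < 2 * pi \<Longrightarrow> (sin_series 2 has_real_derivative - clA t) (at t)"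
  by (rule has_real_derivative_of_has_integral[OF has_integral_sin_series_2])
     (auto intro!: continuous_intros continuous_on_clA)

section \<open>Even zeta values\<close>

definition rat_pi_poly :: "nat \<Rightarrow> (real \<Rightarrow> real) \<Rightarrow> bool" where
  "rat_pi_poly r f \<longleftrightarrow> (\<exists>c. (\<forall>i. c i \<in> \<rat>) \<and>
     (\<forall>x\<in>{0..2 * pi}. f x = (\<Sum>i\<le>r. c i * pi ^ (r - i) * x ^ i)))"

lemma rat_pi_poly_cong:
  "rat_pi_poly r f \<Longrightarrow> (\<And>x. x \<in> {0..2 * pi} \<Longrightarrow> f x = g x) \<Longrightarrow> rat_pi_poly r g"
  unfolding rat_pi_poly_def by metis

lemma rat_pi_poly_add:
  assumes "rat_pi_poly r f" "rat_pi_poly r g"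
  shows "rat_pi_poly r (\<lambda>x. f x + g x)"
proof -
  obtain c d where "\<forall>i. c i \<in> \<rat>" "\<forall>i. d i \<in> \<rat>"
    "\<forall>x\<in>{0..2 * pi}. f x = (\<Sum>i\<le>r. c i * pi ^ (r - i) * x ^ i)"
    "\<forall>x\<in>{0..2 * pi}. g x = (\<Sum>i\<le>r. d i * pi ^ (r - i) * x ^ i)"
    using assms unfolding rat_pi_poly_def by blast
  then show ?thesis
    unfolding rat_pi_poly_def
    by (intro exI[of _ "\<lambda>i. c i + d i"]) (auto simp: sum.distrib ring_distribs)
qed

lemma rat_pi_poly_cmult:
  assumes "rat_pi_poly r f" "q \<in> \<rat>"
  shows "rat_pi_poly r (\<lambda>x. q * f x)"
proof -
  obtain c where "\<forall>i. c i \<in> \<rat>" "\<forall>x\<in>{0..2 * pi}. f x = (\<Sum>i\<le>r. c i * pi ^ (r - i) * x ^ i)"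
    using assms(1) unfolding rat_pi_poly_def by blast
  then show ?thesis
    unfolding rat_pi_poly_def using assms(2)
    by (intro exI[of _ "\<lambda>i. q * c i"]) (auto simp: sum_distrib_left mult.assoc)
qed

lemma rat_pi_poly_monomial:
  assumes "j \<le> r" "q \<in> \<rat>"
  shows "rat_pi_poly r (\<lambda>x. q * pi ^ (r - j) * x ^ j)"
  unfolding rat_pi_poly_def
proof (intro exI[of _ "\<lambda>i. if i = j then q else 0"] conjI allI ballI)
  show "(if i = j then q else 0) \<in> \<rat>" for i
    using assms by auto
  show "q * pi ^ (r - j) * x ^ j = (\<Sum>i\<le>r. (if i = j then q else 0) * pi ^ (r - i) * x ^ i)" for x
    using assms(1) by (simp add: if_distrib[of "\<lambda>c. c * _"] sum.delta cong: if_cong)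
qed

lemma rat_pi_poly_at_0:
  assumes "rat_pi_poly r f"
  shows "\<exists>q\<in>\<rat>. f 0 = q * pi ^ r"
proof -
  obtain c where "\<forall>i. c i \<in> \<rat>" "\<forall>x\<in>{0..2 * pi}. f x = (\<Sum>i\<le>r. c i * pi ^ (r - i) * x ^ i)"
    using assms unfolding rat_pi_poly_def by blast
  then show ?thesis
    by (intro bexI[of _ "c 0"]) (auto simp: zero_power atMost_atLeast0 sum.atLeast_Suc_atMost)
qed

lemma rat_pi_poly_at_2pi:
  assumes "rat_pi_poly r f"
  shows "\<exists>q\<in>\<rat>. f (2 * pi) = q * pi ^ r"
proof -
  obtain c where c: "\<forall>i. c i \<in> \<rat>" "\<forall>x\<in>{0..2 * pi}. f x = (\<Sum>i\<le>r. c i * pi ^ (r - i) * x ^ i)"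
    using assms unfolding rat_pi_poly_def by blast
  have "f (2 * pi) = (\<Sum>i\<le>r. c i * pi ^ (r - i) * (2 * pi) ^ i)"
    using c(2) by simp
  also have "\<dots> = (\<Sum>i\<le>r. (c i * 2 ^ i) * pi ^ r)"
  proof (rule sum.cong)
    show "c i * pi ^ (r - i) * (2 * pi) ^ i = (c i * 2 ^ i) * pi ^ r" if "i \<in> {..r}" for i
      using that by (simp add: power_mult_distrib mult_ac flip: power_add)
  qed simp
  finally have "f (2 * pi) = (\<Sum>i\<le>r. c i * 2 ^ i) * pi ^ r"
    by (simp add: sum_distrib_right)
  then show ?thesis
    using c(1) by (auto intro: Rats_sum)
qed

lemma rat_pi_poly_antiderivative:
  assumes f: "rat_pi_poly r f"
    and F': "\<And>x. 0 < x \<Longrightarrow> x < 2 * pi \<Longrightarrow> (F has_real_derivative f x) (at x)"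
    and F: "continuous_on {0..2 * pi} F"
  shows "rat_pi_poly (Suc r) (\<lambda>x. F x - F 0)"
proof -
  obtain c where c: "\<forall>i. c i \<in> \<rat>" "\<forall>x\<in>{0..2 * pi}. f x = (\<Sum>i\<le>r. c i * pi ^ (r - i) * x ^ i)"
    using f unfolding rat_pi_poly_def by blast
  define G where "G x = (\<Sum>i\<le>r. c i / real (Suc i) * pi ^ (r - i) * x ^ Suc i)" for x
  have G': "(G has_real_derivative (\<Sum>i\<le>r. c i * pi ^ (r - i) * x ^ i)) (at x)" for x
  proof -
    have "(G has_real_derivative
            (\<Sum>i\<le>r. c i / real (Suc i) * pi ^ (r - i) * (real (Suc i) * x ^ i))) (at x)"
      unfolding G_def[abs_def] using DERIV_pow[of "Suc _" x] by (intro DERIV_sum DERIV_cmult) simp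
    then show ?thesis
      by (simp add: mult.assoc del: of_nat_Suc)
  qed
  have const: "F x - G x = F 0 - G 0" if "x \<in> {0..2 * pi}" for x
  proof (rule DERIV_isconst2[of 0 "2 * pi"])
    show "continuous_on {0..2 * pi} (\<lambda>x. F x - G x)"
      unfolding G_def by (intro continuous_intros F)
    show "((\<lambda>x. F x - G x) has_real_derivative 0) (at y)" if "0 < y" "y < 2 * pi" for y
      using DERIV_diff[OF F'[OF that] G'] c(2) that by simp
  qed (use that in auto)
  have "rat_pi_poly (Suc r) G"
    unfolding rat_pi_poly_def
  proof (intro exI[of _ "\<lambda>i. if i = 0 then 0 else c (i - 1) / real i"] conjI allI ballI)
    show "(if i = 0 then 0 else c (i - 1) / real i) \<in> \<rat>" for i
      using c(1) by auto
    show "G x = (\<Sum>i\<le>Suc r. (if i = 0 then 0 else c (i - 1) / real i) * pi ^ (Suc r - i) * x ^ i)" for x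
      unfolding G_def sum.atMost_Suc_shift by (simp del: of_nat_Suc)
  qed
  moreover have "G 0 = 0"
    by (simp add: G_def)
  ultimately show ?thesis
    using rat_pi_poly_cong[of "Suc r" G "\<lambda>x. F x - F 0"] const by fastforce
qed

lemma rat_pi_poly_cos_series_2: "rat_pi_poly 2 (cos_series 2)"
proof -
  have "rat_pi_poly 1 (\<lambda>x. (x - pi) / 2)"
    by (rule rat_pi_poly_cong[OF rat_pi_poly_add[OF rat_pi_poly_monomial[of 0 1 "- 1 / 2"]
          rat_pi_poly_monomial[of 1 1 "1 / 2"]]]) (auto simp: field_simps)
  then have "rat_pi_poly 2 (\<lambda>x. cos_series 2 x - cos_series 2 0)"
    using rat_pi_poly_antiderivative[of 1 _ "cos_series 2"] cos_series_2_has_derivative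
      continuous_on_subset[OF continuous_on_cos_series[of 2]]
    by (simp add: numeral_2_eq_2)
  then have "rat_pi_poly 2 (\<lambda>x. 1 / 6 * pi ^ (2 - 0) * x ^ 0 + (cos_series 2 x - cos_series 2 0))"
    by (intro rat_pi_poly_add rat_pi_poly_monomial) auto
  moreover have "cos_series 2 0 = 1 / 6 * pi ^ 2"
    using cos_series_0[of 2] inverse_squares_sums
    by (simp add: zeta_val_def sums_iff add.commute[of _ 1])
  ultimately show ?thesis
    by (auto elim: rat_pi_poly_cong)
qed

lemma rat_pi_poly_cos_series_add_2:
  assumes r: "2 \<le> r" and C: "rat_pi_poly r (cos_series r)"
  shows "rat_pi_poly (r + 2) (cos_series (r + 2))"
proof -
  have cont: "continuous_on {0..2 * pi} (cos_series s)" "continuous_on {0..2 * pi} (sin_series s)"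
    if "2 \<le> s" for s
    using continuous_on_cos_series[OF that] continuous_on_sin_series[OF that]
    by (auto intro: continuous_on_subset)
  have "rat_pi_poly (r + 1) (\<lambda>x. sin_series (r + 1) x - sin_series (r + 1) 0)"
    using rat_pi_poly_antiderivative[OF C _ cont(2)] sin_series_has_derivative[of "r + 1"] r by simp
  then have S: "rat_pi_poly (r + 1) (\<lambda>x. - 1 * sin_series (r + 1) x)"
    by (intro rat_pi_poly_cmult) (auto simp: sin_series_0)
  define z where "z = cos_series (r + 2) 0"
  have C': "rat_pi_poly (r + 2) (\<lambda>x. cos_series (r + 2) x - z)"
    unfolding z_def
    using rat_pi_poly_antiderivative[OF S _ cont(1)]
      cos_series_has_derivative[of "r + 2"] r by simp
  \<comment> \<open>The constant z is determined by sin_series (r + 3) vanishing at both 0 and 2 pi.\<close>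
  define H where "H x = sin_series (r + 3) x - z * x" for x
  have "(H has_real_derivative cos_series (r + 2) x - z) (at x)" for x
    unfolding H_def using sin_series_has_derivative[of "r + 3" x] r
    by (auto intro!: derivative_eq_intros)
  moreover have "continuous_on {0..2 * pi} H"
    unfolding H_def using r by (intro continuous_intros cont) simp
  ultimately have "rat_pi_poly (r + 3) (\<lambda>x. H x - H 0)"
    using rat_pi_poly_antiderivative[OF C', of H] by (simp add: numeral_3_eq_3)
  then obtain q where q: "q \<in> \<rat>" "H (2 * pi) - H 0 = q * pi ^ (r + 3)"
    using rat_pi_poly_at_2pi by blast
  have "H (2 * pi) - H 0 = - 2 * z * pi"
    by (simp add: H_def sin_series_0 sin_series_2pi)
  moreover have "pi ^ (r + 3) = pi ^ (r + 2) * pi"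
    by (simp add: numeral_eq_Suc)
  ultimately have "(- 2 * z) * pi = (q * pi ^ (r + 2)) * pi"
    using q(2) by (simp add: mult_ac)
  then have z: "z = - q / 2 * pi ^ (r + 2)"
    by (simp only: mult_right_cancel[OF pi_neq_zero])
  have "rat_pi_poly (r + 2) (\<lambda>x. - q / 2 * pi ^ (r + 2 - 0) * x ^ 0 + (cos_series (r + 2) x - z))"
    using rat_pi_poly_add[OF rat_pi_poly_monomial[of 0 "r + 2" "- q / 2"] C'] q(1) by simp
  then show ?thesis
    by (rule rat_pi_poly_cong) (simp only: z diff_zero power_0 mult_1_right)
qed

lemma zeta_even_rat_multiple_pi_power:
  assumes "1 \<le> m"
  shows "\<exists>q\<in>\<rat>. zeta_val (2 * m) = q * pi ^ (2 * m)"
proof -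
  have "rat_pi_poly (2 * m) (cos_series (2 * m))"
    using assms
  proof (induction m rule: nat_induct_at_least)
    case (Suc m)
    then show ?case
      using rat_pi_poly_cos_series_add_2[of "2 * m"] by simp
  qed (simp add: rat_pi_poly_cos_series_2)
  from rat_pi_poly_at_0[OF this] show ?thesis
    using cos_series_0[of "2 * m"] assms by simp
qed

section \<open>Odd zeta values via the Clausen function at pi / 3\<close>

definition clausen :: "nat \<Rightarrow> real \<Rightarrow> real" where
  "clausen r = (if odd r then cos_series r else sin_series r)"

lemma clausen_has_derivative:
  "3 \<le> r \<Longrightarrow> (clausen r has_real_derivative (- 1) ^ r * clausen (r - 1) x) (at x)"
  using cos_series_has_derivative[of r x] sin_series_has_derivative[of r x]
  by (auto simp: clausen_def)

lemma clausen_0: "2 \<le> r \<Longrightarrow> clausen r 0 = (if odd r then zeta_val r else 0)"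
  by (simp add: clausen_def cos_series_0 sin_series_0)

lemma clausen_taylor:
  assumes r: "3 \<le> r" and b: "0 \<le> b"
  obtains \<epsilon> :: "nat \<Rightarrow> real" where "\<And>i. \<epsilon> i \<in> {- 1, 1}" "\<epsilon> 0 = 1"
    "clausen r b = (\<Sum>i<r - 2. \<epsilon> i * b ^ i / fact i * clausen (r - i) 0) +
       \<epsilon> (r - 2) / fact (r - 3) * integral {0..b} (\<lambda>t. (b - t) ^ (r - 3) * sin_series 2 t)"
proof
  define \<epsilon> :: "nat \<Rightarrow> real" where "\<epsilon> i = (- 1) ^ (\<Sum>l<i. r - l)" for i
  define D where "D i = (\<lambda>t. \<epsilon> i * clausen (r - i) t)" for i
  show "\<epsilon> i \<in> {- 1, 1}" for i
    unfolding \<epsilon>_def by (cases "even (\<Sum>l<i. r - l)") auto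
  show "\<epsilon> 0 = 1"
    by (simp add: \<epsilon>_def)
  have D: "(D m has_vector_derivative D (Suc m) t) (at t within {0..b})" if "m < r - 2" for m t
  proof -
    have "(clausen (r - m) has_real_derivative (- 1) ^ (r - m) * clausen (r - Suc m) t) (at t)"
      using clausen_has_derivative[of "r - m" t] that by simp
    then have "(D m has_real_derivative \<epsilon> m * ((- 1) ^ (r - m) * clausen (r - Suc m) t)) (at t)"
      unfolding D_def by (rule DERIV_cmult)
    moreover have "\<epsilon> (Suc m) = \<epsilon> m * (- 1) ^ (r - m)"
      by (simp add: \<epsilon>_def power_add)
    ultimately show ?thesis
      by (simp add: D_def has_real_derivative_iff_has_vector_derivative[symmetric]
          has_field_derivative_at_within mult.assoc)
  qed
  have "clausen r b = (\<Sum>i<r - 2. ((b - 0) ^ i / fact i) *\<^sub>R D i 0) +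
      integral {0..b} (\<lambda>t. ((b - t) ^ (r - 2 - 1) / fact (r - 2 - 1)) *\<^sub>R D (r - 2) t)"
    using Taylor_integral[of "r - 2" D "clausen r" 0 b] D r b by (simp add: D_def \<epsilon>_def)
  also have "\<dots> = (\<Sum>i<r - 2. \<epsilon> i * b ^ i / fact i * clausen (r - i) 0) +
       \<epsilon> (r - 2) / fact (r - 3) * integral {0..b} (\<lambda>t. (b - t) ^ (r - 3) * sin_series 2 t)"
  proof -
    have "r - (r - 2) = 2" "r - 2 - 1 = r - 3"
      using r by auto
    then show ?thesis
      by (simp add: D_def clausen_def field_simps flip: integral_mult_right)
  qed
  finally show "clausen r b = \<dots>" .
qed

lemma integral_power_mult_clA:
  assumes b: "0 < b" "b < 2 * pi"
  shows "integral {0..b} (\<lambda>t. (t - b) ^ Suc n * clA t) =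
    Suc n * integral {0..b} (\<lambda>t. (t - b) ^ n * sin_series 2 t)"
proof -
  define \<phi> where "\<phi> t = (t - b) ^ Suc n * sin_series 2 t" for t
  define \<phi>' where "\<phi>' t = Suc n * ((t - b) ^ n * sin_series 2 t) - (t - b) ^ Suc n * clA t" for t
  have I: "(\<phi>' has_integral \<phi> b - \<phi> 0) {0..b}"
  proof (rule fundamental_theorem_of_calculus_interior)
    show "continuous_on {0..b} \<phi>"
      unfolding \<phi>_def using continuous_on_sin_series[of 2]
      by (intro continuous_intros) (auto intro: continuous_on_subset)
    show "(\<phi> has_vector_derivative \<phi>' t) (at t)" if "t \<in> {0<..<b}" for t
    proof -
      have d1: "((\<lambda>t. (t - b) ^ Suc n) has_real_derivative Suc n * (t - b) ^ n) (at t)"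
        using DERIV_chain2[OF DERIV_pow[of "Suc n"] DERIV_diff[OF DERIV_ident DERIV_const]] by simp
      have d2: "(sin_series 2 has_real_derivative - clA t) (at t)"
        using that b by (intro sin_series_2_has_derivative) auto
      have "Suc n * (t - b) ^ n * sin_series 2 t + - clA t * (t - b) ^ Suc n = \<phi>' t"
        by (simp only: \<phi>'_def mult_ac)
      with DERIV_mult[OF d1 d2] show ?thesis
        unfolding \<phi>_def[abs_def] has_real_derivative_iff_has_vector_derivative[symmetric]
        by simp
    qed
  qed (use b in simp)
  have boundary: "\<phi> b - \<phi> 0 = 0"
    by (simp add: \<phi>_def sin_series_0)
  have J: "((\<lambda>t. Suc n * ((t - b) ^ n * sin_series 2 t)) has_integral
      Suc n * integral {0..b} (\<lambda>t. (t - b) ^ n * sin_series 2 t)) {0..b}"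
    using continuous_on_sin_series[of 2]
    by (intro has_integral_mult_right integrable_integral integrable_continuous_real
        continuous_intros) (auto intro: continuous_on_subset)
  from has_integral_diff[OF J I] boundary
  have "((\<lambda>t. (t - b) ^ Suc n * clA t) has_integral
      Suc n * integral {0..b} (\<lambda>t. (t - b) ^ n * sin_series 2 t)) {0..b}"
    by (simp add: \<phi>'_def)
  then show ?thesis
    by (rule integral_unique)
qed

lemma cos_nat_pi_over_3:
  "cos (real n * (pi / 3)) =
     1 / 2 - of_bool (2 dvd n) - 3 / 2 * of_bool (3 dvd n) + 3 * of_bool (6 dvd n)"
proof -
  define i where "i = n mod 6"
  have "real n = real i + 6 * real (n div 6)"
    unfolding i_def by (metis mod_mult_div_eq of_nat_add of_nat_mult of_nat_numeral)
  then have "real n * (pi / 3) = real i * (pi / 3) + real (n div 6) * (2 * pi)"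
    by (simp add: field_simps)
  moreover have "cos (real k * (2 * pi)) = 1" "sin (real k * (2 * pi)) = 0" for k
    using cos_int_2pin[of "int k"] sin_npi[of "2 * k"] by (simp_all add: mult_ac)
  ultimately have cos_n: "cos (real n * (pi / 3)) = cos (real i * (pi / 3))"
    by (simp only: cos_add)
  have dvd_n: "2 dvd n \<longleftrightarrow> 2 dvd i" "3 dvd n \<longleftrightarrow> 3 dvd i" "6 dvd n \<longleftrightarrow> 6 dvd i"
    unfolding i_def by (simp_all add: dvd_mod_iff)
  have "i = 0 \<or> i = 1 \<or> i = 2 \<or> i = 3 \<or> i = 4 \<or> i = 5"
    unfolding i_def by linarith
  moreover have "cos (2 * (pi / 3)) = - 1 / 2" "cos (4 * (pi / 3)) = - 1 / 2"
    "cos (5 * (pi / 3)) = 1 / 2"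
    using cos_pi_minus[of "pi / 3"] cos_periodic_pi[of "pi / 3"] cos_2pi_minus[of "pi / 3"]
    by (simp_all add: cos_60 field_simps)
  ultimately show ?thesis
    unfolding cos_n dvd_n by (auto simp: cos_60)
qed

lemma sums_dvd_over_power:
  assumes d: "0 < d" and s: "2 \<le> s"
  shows "(\<lambda>n. of_bool (d dvd n) / real n ^ s) sums (zeta_val s / real d ^ s)"
proof -
  have "strict_mono (\<lambda>m. d * m)"
    using d by (auto simp: strict_mono_def)
  moreover have "of_bool (d dvd n) / real n ^ s = 0" if "n \<notin> range (\<lambda>m. d * m)" for n
    using that by auto
  moreover have "(\<lambda>m. of_bool (d dvd (d * m)) / real (d * m) ^ s) = (\<lambda>m. 1 / real d ^ s * (1 / real m ^ s))"
    by (simp add: power_mult_distrib)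
  ultimately show ?thesis
    using sums_mult[OF zeta_val_sums[OF s], of "1 / real d ^ s"]
    by (subst sums_mono_reindex[symmetric]) auto
qed

lemma cos_series_pi_over_3:
  assumes s: "2 \<le> s"
  shows "cos_series s (pi / 3) = (1 - 2 / 2 ^ s) * (1 - 3 / 3 ^ s) / 2 * zeta_val s"
proof -
  have "(\<lambda>n. 1 / 2 * (1 / real n ^ s) - of_bool (2 dvd n) / real n ^ s
      - 3 / 2 * (of_bool (3 dvd n) / real n ^ s) + 3 * (of_bool (6 dvd n) / real n ^ s))
      sums (1 / 2 * zeta_val s - zeta_val s / real 2 ^ s - 3 / 2 * (zeta_val s / real 3 ^ s)
        + 3 * (zeta_val s / real 6 ^ s))"
    using s by (intro sums_add sums_diff sums_mult zeta_val_sums sums_dvd_over_power) auto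
  moreover have "cos (real n * (pi / 3)) / real n ^ s = 1 / 2 * (1 / real n ^ s) - of_bool (2 dvd n) / real n ^ s
      - 3 / 2 * (of_bool (3 dvd n) / real n ^ s) + 3 * (of_bool (6 dvd n) / real n ^ s)" for n
    unfolding cos_nat_pi_over_3 by (simp add: field_simps)
  ultimately have "cos_series s (pi / 3) = 1 / 2 * zeta_val s - zeta_val s / 2 ^ s
      - 3 / 2 * (zeta_val s / 3 ^ s) + 3 * (zeta_val s / 6 ^ s)"
    unfolding cos_series_def by (simp add: sums_iff)
  moreover have "(6 :: real) ^ s = 2 ^ s * 3 ^ s"
    by (simp flip: power_mult_distrib)
  ultimately show ?thesis
    by (simp add: field_simps)
qed

lemma zeta_odd_eq_combination:
  assumes k: "odd k" "3 \<le> k"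
  obtains c :: "nat \<Rightarrow> real" and d :: real where "\<And>i. c i \<in> \<rat>" "d \<in> \<rat>"
    "zeta_val k = d * SLs [k] + (\<Sum>i\<in>{1..<k - 2}. c i * (pi ^ i * clausen (k - i) 0))"
proof -
  obtain \<epsilon> :: "nat \<Rightarrow> real" where \<epsilon>: "\<And>i. \<epsilon> i \<in> {- 1, 1}" "\<epsilon> 0 = 1"
    "clausen k (pi / 3) = (\<Sum>i<k - 2. \<epsilon> i * (pi / 3) ^ i / fact i * clausen (k - i) 0) +
       \<epsilon> (k - 2) / fact (k - 3) * integral {0..pi / 3} (\<lambda>t. (pi / 3 - t) ^ (k - 3) * sin_series 2 t)"
    using clausen_taylor[OF k(2), of "pi / 3"] by auto
  define \<kappa> :: real where "\<kappa> = (1 - 2 / 2 ^ k) * (1 - 3 / 3 ^ k) / 2"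
  have "(2 :: real) \<le> 2 ^ k" "(3 :: real) \<le> 3 ^ k"
    using k(2) by (simp_all add: self_le_power)
  then have "\<kappa> \<le> 1 / 2"
    unfolding \<kappa>_def by (intro divide_right_mono mult_le_one) (auto simp: field_simps)
  then have \<kappa>: "\<kappa> - 1 \<noteq> 0"
    by simp
  have "clausen k (pi / 3) = \<kappa> * zeta_val k"
    using k cos_series_pi_over_3[of k] by (simp add: clausen_def \<kappa>_def)
  moreover have "(\<Sum>i<k - 2. \<epsilon> i * (pi / 3) ^ i / fact i * clausen (k - i) 0) =
      zeta_val k + (\<Sum>i\<in>{1..<k - 2}. \<epsilon> i / (3 ^ i * fact i) * (pi ^ i * clausen (k - i) 0))"
    using k \<epsilon>(2) clausen_0[of k]
    by (simp add: lessThan_atLeast0 sum.atLeast_Suc_lessThan power_divide mult.assoc)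
  moreover have "\<epsilon> (k - 2) / fact (k - 3) * integral {0..pi / 3} (\<lambda>t. (pi / 3 - t) ^ (k - 3) * sin_series 2 t) =
      \<epsilon> (k - 2) / fact (k - 2) * SLs [k]"
  proof -
    have "(pi / 3 - t) ^ (k - 3) = (t - pi / 3) ^ (k - 3)" for t
      using k by (subst minus_diff_eq[symmetric], subst power_minus_even) auto
    moreover have "k - 2 = Suc (k - 3)"
      using k by simp
    ultimately show ?thesis
      using integral_power_mult_clA[of "pi / 3" "k - 3"] by (simp add: SLs_def)
  qed
  ultimately have "(\<kappa> - 1) * zeta_val k = \<epsilon> (k - 2) / fact (k - 2) * SLs [k] +
      (\<Sum>i\<in>{1..<k - 2}. \<epsilon> i / (3 ^ i * fact i) * (pi ^ i * clausen (k - i) 0))"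
    using \<epsilon>(3) by (simp add: left_diff_distrib)
  then have "zeta_val k = (\<epsilon> (k - 2) / fact (k - 2) * SLs [k] +
      (\<Sum>i\<in>{1..<k - 2}. \<epsilon> i / (3 ^ i * fact i) * (pi ^ i * clausen (k - i) 0))) / (\<kappa> - 1)"
    using \<kappa> by (simp add: eq_divide_eq mult.commute)
  also have "\<dots> = \<epsilon> (k - 2) / fact (k - 2) / (\<kappa> - 1) * SLs [k] +
      (\<Sum>i\<in>{1..<k - 2}. \<epsilon> i / (3 ^ i * fact i) / (\<kappa> - 1) * (pi ^ i * clausen (k - i) 0))"
    by (simp add: add_divide_distrib sum_divide_distrib)
  finally have "zeta_val k = \<dots>" .
  moreover have "\<kappa> \<in> \<rat>" "\<epsilon> i \<in> \<rat>" "fact i \<in> (\<rat> :: real set)" for i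
    unfolding \<kappa>_def using \<epsilon>(1)[of i] by (auto simp: Rats_of_nat[of "fact i", unfolded of_nat_fact])
  ultimately show ?thesis
    by (intro that[of "\<lambda>i. \<epsilon> i / (3 ^ i * fact i) / (\<kappa> - 1)" "\<epsilon> (k - 2) / fact (k - 2) / (\<kappa> - 1)"])
       (auto intro!: Rats_divide Rats_mult Rats_diff Rats_power)
qed

section \<open>Rational spans\<close>

lemma qspan_superset: "x \<in> S \<Longrightarrow> x \<in> qspan S"
  unfolding qspan_def by (intro CollectI exI[of _ "{x}"] exI[of _ "\<lambda>_. 1"]) auto

lemma qspan_zero: "0 \<in> qspan S"
  unfolding qspan_def by (intro CollectI exI[of _ "{}"]) auto

lemma qspan_rat_mult:
  assumes "q \<in> \<rat>" "x \<in> qspan S"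
  shows "q * x \<in> qspan S"
proof -
  obtain F c where "finite F" "F \<subseteq> S" "\<forall>s\<in>F. c s \<in> \<rat>" "x = (\<Sum>s\<in>F. c s * s)"
    using assms(2) unfolding qspan_def by blast
  then show ?thesis
    unfolding qspan_def using assms(1)
    by (intro CollectI exI[of _ F] exI[of _ "\<lambda>s. q * c s"]) (auto simp: sum_distrib_left mult.assoc)
qed

lemma qspan_add:
  assumes "x \<in> qspan S" "y \<in> qspan S"
  shows "x + y \<in> qspan S"
proof -
  obtain F c where F: "finite F" "F \<subseteq> S" "\<forall>s\<in>F. c s \<in> \<rat>" "x = (\<Sum>s\<in>F. c s * s)"
    using assms(1) unfolding qspan_def by blast
  obtain G d where G: "finite G" "G \<subseteq> S" "\<forall>s\<in>G. d s \<in> \<rat>" "y = (\<Sum>s\<in>G. d s * s)"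
    using assms(2) unfolding qspan_def by blast
  define e where "e s = (if s \<in> F then c s else 0) + (if s \<in> G then d s else 0)" for s
  have extend: "(\<Sum>s\<in>F \<union> G. (if s \<in> A then a s else 0) * s) = (\<Sum>s\<in>A. a s * s)"
    if "A \<subseteq> F \<union> G" for A and a :: "real \<Rightarrow> real"
    by (rule sum.mono_neutral_cong_right) (use F G that in auto)
  have "x = (\<Sum>s\<in>F \<union> G. (if s \<in> F then c s else 0) * s)"
    using F by (simp add: extend)
  moreover have "y = (\<Sum>s\<in>F \<union> G. (if s \<in> G then d s else 0) * s)"
    using G by (simp add: extend)
  ultimately have "x + y = (\<Sum>s\<in>F \<union> G. e s * s)"
    by (simp add: e_def distrib_right sum.distrib)
  moreover have "\<forall>s\<in>F \<union> G. e s \<in> \<rat>"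
    using F G unfolding e_def by auto
  ultimately show ?thesis
    unfolding qspan_def using F G by (intro CollectI exI[of _ "F \<union> G"] exI[of _ e]) auto
qed

lemma qspan_sum:
  "finite I \<Longrightarrow> (\<And>i. i \<in> I \<Longrightarrow> f i \<in> qspan S) \<Longrightarrow> (\<Sum>i\<in>I. f i) \<in> qspan S"
  by (induction I rule: finite_induct) (auto intro: qspan_zero qspan_add)

lemma qspan_mult_image:
  assumes x: "x \<in> qspan S" and a: "a \<noteq> 0" and ST: "(\<lambda>u. a * u) ` S \<subseteq> T"
  shows "a * x \<in> qspan T"
proof -
  obtain F c where F: "finite F" "F \<subseteq> S" "\<forall>s\<in>F. c s \<in> \<rat>" "x = (\<Sum>s\<in>F. c s * s)"
    using x unfolding qspan_def by blast
  have "inj_on (\<lambda>u. a * u) F"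
    using a by (auto simp: inj_on_def)
  then have "(\<Sum>v\<in>(\<lambda>u. a * u) ` F. c (v / a) * v) = a * x"
    using a F(4) by (simp add: sum.reindex sum_distrib_left mult_ac)
  then show ?thesis
    unfolding qspan_def using F ST a
    by (intro CollectI exI[of _ "(\<lambda>u. a * u) ` F"] exI[of _ "\<lambda>v. c (v / a)"]) auto
qed

lemma Sprime_mult_pi_power: "(\<lambda>u. pi ^ (2 * d) * u) ` Sprime s n \<subseteq> Sprime (s + 2 * d) n"
proof
  fix v assume "v \<in> (\<lambda>u. pi ^ (2 * d) * u) ` Sprime s n"
  then obtain m ks where "v = pi ^ (2 * (d + m)) * SLs ks" "2 * (d + m) + sum_list ks = s + 2 * d"
    "length ks \<le> n" "\<forall>j\<in>set ks. 3 \<le> j \<and> odd j"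
    unfolding Sprime_def by (auto simp: power_add)
  then show "v \<in> Sprime (s + 2 * d) n"
    unfolding Sprime_def by blast
qed

lemma zeta_even_in_qspan_Sprime:
  assumes "1 \<le> m"
  shows "zeta_val (2 * m) \<in> qspan (Sprime (2 * m) n)"
proof -
  obtain q where "q \<in> \<rat>" "zeta_val (2 * m) = q * pi ^ (2 * m)"
    using zeta_even_rat_multiple_pi_power[OF assms] by blast
  moreover have "pi ^ (2 * m) * SLs [] \<in> Sprime (2 * m) n"
    unfolding Sprime_def by (intro CollectI exI[of _ m] exI[of _ "[]"]) auto
  ultimately show ?thesis
    by (simp add: SLs_def qspan_rat_mult qspan_superset)
qed

lemma zeta_odd_in_qspan_Sprime:
  assumes k: "odd k" "3 \<le> k" and n: "1 \<le> n"
    and smaller: "\<And>s. odd s \<Longrightarrow> 3 \<le> s \<Longrightarrow> s < k \<Longrightarrow> zeta_val s \<in> qspan (Sprime s n)"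
  shows "zeta_val k \<in> qspan (Sprime k n)"
proof -
  obtain c d where rat: "\<And>i. c i \<in> \<rat>" "d \<in> \<rat>"
    and zeta: "zeta_val k = d * SLs [k] + (\<Sum>i\<in>{1..<k - 2}. c i * (pi ^ i * clausen (k - i) 0))"
    using zeta_odd_eq_combination[OF k] by blast
  have "SLs [k] \<in> Sprime k n"
    unfolding Sprime_def using k n by (intro CollectI exI[of _ 0] exI[of _ "[k]"]) auto
  moreover have "pi ^ i * clausen (k - i) 0 \<in> qspan (Sprime k n)" if i: "i \<in> {1..<k - 2}" for i
  proof (cases "even i")
    case True
    then obtain j where j: "i = 2 * j"
      by (auto elim: evenE)
    have "zeta_val (k - i) \<in> qspan (Sprime (k - i) n)"
      using i j k by (intro smaller) auto
    then have "pi ^ (2 * j) * zeta_val (k - i) \<in> qspan (Sprime (k - i + 2 * j) n)"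
      by (rule qspan_mult_image[OF _ _ Sprime_mult_pi_power]) simp
    moreover have "k - i + 2 * j = k"
      using i j by auto
    moreover have "clausen (k - i) 0 = zeta_val (k - i)"
      using i j k by (subst clausen_0) auto
    ultimately show ?thesis
      using j by simp
  next
    case False
    then have "clausen (k - i) 0 = 0"
      using i k by (subst clausen_0) auto
    then show ?thesis
      by (simp add: qspan_zero)
  qed
  ultimately show ?thesis
    unfolding zeta using rat by (intro qspan_add qspan_sum) (auto intro: qspan_rat_mult qspan_superset)
qed

theorem theorem4:
  fixes k :: nat
  assumes "k \<ge> 2"
  shows "zeta_val k \<in> qspan (Sprime k 1)"
  using assms
proof (induction k rule: less_induct)
  case (less k)
  show ?case
  proof (cases "even k")
    case True
    then obtain m where "k = 2 * m" "1 \<le> m"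
      using less.prems by (auto elim: evenE)
    then show ?thesis
      using zeta_even_in_qspan_Sprime by blast
  next
    case False
    then have k: "odd k" "3 \<le> k"
      using less.prems by (auto simp: le_less intro: Suc_leI)
    show ?thesis
    proof (rule zeta_odd_in_qspan_Sprime[OF k])
      show "zeta_val s \<in> qspan (Sprime s 1)" if "odd s" "3 \<le> s" "s < k" for s
        using that by (intro less.IH) auto
    qed simp
  qed
qed

end
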